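(* Let $I=\{1,\dots,\ell\}$, $J=\{\ell+1,\dots,p\}$, let $h_1,\dots,h_p\colon\mathbb R^n\times\mathbb R^m\to\overline{\mathbb R}$ and $\Gamma(x):=\{y\in\mathbb R^m\mid h_i(x,y)\le0\ (i\in I),\ h_i(x,y)=0\ (i\in J)\}$. Fix $\bar x\in\operatorname{dom}\Gamma$ and $\bar y\in\Gamma(\bar x)$. Assume that $h_1,\dots,h_p$ are continuous and continuously differentiable with respect to $y$ in a neighborhood of $\{\bar x\}\times\Gamma(\bar x)$, and that $h_i(x,\cdot)\colon\mathbb R^m\to\mathbb R$ is continuous for every $x\in\operatorname{dom}\Gamma$ and every $i$. Assume (A1): for each $x\in\mathbb R^n$, the functions $h_i(x,\cdot)$, $i\in I$, are convex and the functions $h_i(x,\cdot)$, $i\in J$, are affine; and (A2): $\Gamma$ is locally bounded at $\bar x$. Suppose there exist a constant $M>0$ and sequences $\{x^k\}\subset\operatorname{dom}\Gamma$, $\{\nu^k\}\subset\mathbb R^m$, $\{y^k\}\subset\mathbb R^m$ with $x^k\to\bar x$, $\nu^k\to\bar y$, $\nu^k\notin\Gamma(x^k)$ and $y^k\in\Pi(\nu^k,\Gamma(x^k))$ for all $k$, such that $\Lambda^M_{\nu^k}(x^k,y^k)\neq\emptyset$ for all sufficiently large $k$. Then $y^k\to\bar y$ and, for all sufficiently large $k$, $$\operatorname{dist}(\nu^k,\Gamma(x^k))\le M\max\{0,\max_{i\in I}h_i(x^k,\nu^k),\max_{i\in J}|h_i(x^k,\nu^k)|\}.$$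
   Context: $\operatorname{dom}\Gamma:=\{x\mid\Gamma(x)\ne\emptyset\}$; $\|\cdot\|$ Euclidean norm; $\operatorname{dist}(\nu,A):=\inf_{z\in A}\|z-\nu\|$; $\Pi(\nu,A):=\operatorname{argmin}\{\|z-\nu\|\mid z\in A\}$. $\Gamma$ is locally bounded at $\bar x$ if there are a bounded set $B$ and a neighborhood $V$ of $\bar x$ with $\Gamma(x)\subset B$ for all $x\in V$. For $x\in\operatorname{dom}\Gamma$, $\nu\notin\Gamma(x)$, $y\in\Pi(\nu,\Gamma(x))$ and $M>0$: $\Lambda_\nu(x,y):=\{\lambda\in\mathbb R^p\mid \frac{y-\nu}{\|y-\nu\|}+\sum_{i=1}^p\lambda_i\nabla_yh_i(x,y)=0,\ \lambda_i\ge0,\ \lambda_ih_i(x,y)=0\ \forall i\in I\}$ and $\Lambda^M_\nu(x,y):=\{\lambda\in\Lambda_\nu(x,y)\mid\sum_{i=1}^p|\lambda_i|\le M\}$. *)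

theory Defs
  imports "HOL-Analysis.Analysis" "HOL-Library.Extended_Real"
begin

definition Gamma :: "(nat \<Rightarrow> 'a \<Rightarrow> 'b \<Rightarrow> ereal) \<Rightarrow> nat \<Rightarrow> nat \<Rightarrow> 'a \<Rightarrow> 'b set" where
  "Gamma h l p x = {y. (\<forall>i\<in>{1..l}. h i x y \<le> 0) \<and> (\<forall>i\<in>{l+1..p}. h i x y = 0)}"

definition domS :: "('a \<Rightarrow> 'b set) \<Rightarrow> 'a set" where
  "domS G = {x. G x \<noteq> {}}"

definition locally_bounded_at :: "('a::topological_space \<Rightarrow> 'b::metric_space set) \<Rightarrow> 'a \<Rightarrow> bool" where
  "locally_bounded_at G xb \<longleftrightarrow>
     (\<exists>B V. bounded B \<and> open V \<and> xb \<in> V \<and> (\<forall>x\<in>V. G x \<subseteq> B))"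

definition proj :: "'b::real_normed_vector \<Rightarrow> 'b set \<Rightarrow> 'b set" where
  "proj \<nu> A = {z \<in> A. \<forall>w\<in>A. norm (z - \<nu>) \<le> norm (w - \<nu>)}"

text \<open>Gradient (with respect to the Euclidean inner product) of a function that is
  real-valued near y; chosen by Hilbert choice when it exists.\<close>
definition ygrad :: "('b::euclidean_space \<Rightarrow> ereal) \<Rightarrow> 'b \<Rightarrow> 'b" where
  "ygrad f y = (SOME g. ((\<lambda>z. real_of_ereal (f z)) has_derivative (\<lambda>v. g \<bullet> v)) (at y))"

definition ereal_convex :: "('b::real_vector \<Rightarrow> ereal) \<Rightarrow> bool" where
  "ereal_convex f \<longleftrightarrow> convex {(y, r::real). f y \<le> ereal r}"

definition ereal_affine :: "('b::real_inner \<Rightarrow> ereal) \<Rightarrow> bool" where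
  "ereal_affine f \<longleftrightarrow> (\<exists>a b. \<forall>y. f y = ereal (a \<bullet> y + b))"

definition Lam :: "(nat \<Rightarrow> 'a \<Rightarrow> 'b::euclidean_space \<Rightarrow> ereal) \<Rightarrow> nat \<Rightarrow> nat \<Rightarrow> 'b \<Rightarrow> 'a \<Rightarrow> 'b \<Rightarrow> (nat \<Rightarrow> real) set" where
  "Lam h l p \<nu> x y = {lam.
      (1 / norm (y - \<nu>)) *\<^sub>R (y - \<nu>) + (\<Sum>i=1..p. lam i *\<^sub>R ygrad (h i x) y) = 0
    \<and> (\<forall>i\<in>{1..l}. lam i \<ge> 0 \<and> lam i * real_of_ereal (h i x y) = 0)
    \<and> (\<forall>i. i \<notin> {1..p} \<longrightarrow> lam i = 0)}"

definition LamM :: "(nat \<Rightarrow> 'a \<Rightarrow> 'b::euclidean_space \<Rightarrow> ereal) \<Rightarrow> nat \<Rightarrow> nat \<Rightarrow> real \<Rightarrow> 'b \<Rightarrow> 'a \<Rightarrow> 'b \<Rightarrow> (nat \<Rightarrow> real) set" where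
  "LamM h l p M \<nu> x y = {lam \<in> Lam h l p \<nu> x y. (\<Sum>i=1..p. \<bar>lam i\<bar>) \<le> M}"

end

theory Submission
  imports Defs
begin

text \<open>
  Let \<open>U\<close> be the neighbourhood of \<open>{xb} \<times> \<Gamma>(xb)\<close> on which the \<open>h\<^sub>i\<close> are smooth in \<open>y\<close>.
  Whenever \<open>(x\<^sup>k, y\<^sup>k) \<in> U\<close>, pairing the multiplier rule with \<open>\<nu>\<^sup>k - y\<^sup>k\<close> and using the
  gradient inequality (an equality for the affine \<open>h\<^sub>i\<close>) and complementarity gives
  \<open>\<parallel>y\<^sup>k - \<nu>\<^sup>k\<parallel> = \<Sum>\<^sub>i \<lambda>\<^sub>i \<nabla>\<^sub>yh\<^sub>i(x\<^sup>k, y\<^sup>k) \<bullet> (\<nu>\<^sup>k - y\<^sup>k) \<le> \<Sum>\<^sub>i \<lambda>\<^sub>i h\<^sub>i(x\<^sup>k, \<nu>\<^sup>k) \<le> M \<cdot> (violation at \<nu>\<^sup>k)\<close>.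
  This is the distance bound, and since the violation at \<open>\<nu>\<^sup>k \<longrightarrow> yb \<in> \<Gamma>(xb)\<close> tends to 0,
  it also forces \<open>y\<^sup>k \<longrightarrow> yb\<close>.

  That \<open>(x\<^sup>k, y\<^sup>k)\<close> eventually lies in \<open>U\<close> follows from local boundedness once every
  subsequential limit \<open>y\<^sup>*\<close> of \<open>y\<^sup>k\<close> is shown to lie in \<open>\<Gamma>(xb)\<close>. On the segment from
  \<open>yb\<close> to \<open>y\<^sup>*\<close>, convexity lets feasibility pass to the limit at every point over \<open>U\<close>,
  so the feasible part of the segment is relatively open as well as closed, hence contains \<open>y\<^sup>*\<close>.
\<close>

lemma convex_on_real_of_ereal:
  fixes f :: "'b::real_vector \<Rightarrow> ereal"
  assumes "ereal_convex f" and "\<And>y. \<bar>f y\<bar> \<noteq> \<infinity>"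
  shows "convex_on UNIV (\<lambda>y. real_of_ereal (f y))"
proof -
  have "f y \<le> ereal r \<longleftrightarrow> real_of_ereal (f y) \<le> r" for y r
    using assms(2)[of y] by (cases "f y") auto
  then have "{(y, r). f y \<le> ereal r} = epigraph UNIV (\<lambda>y. real_of_ereal (f y))"
    unfolding epigraph_def by auto
  then show ?thesis
    using assms(1) convex_epigraph unfolding ereal_convex_def by metis
qed

lemma real_of_ereal_affine_convex_concave:
  fixes f :: "'b::real_inner \<Rightarrow> ereal"
  assumes "ereal_affine f"
  shows "convex_on UNIV (\<lambda>y. real_of_ereal (f y))" and "concave_on UNIV (\<lambda>y. real_of_ereal (f y))"
proof -
  obtain c d where f: "\<And>y. f y = ereal (c \<bullet> y + d)"
    using assms unfolding ereal_affine_def by blast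
  have "real_of_ereal (f (u *\<^sub>R y + v *\<^sub>R z)) = u * real_of_ereal (f y) + v * real_of_ereal (f z)"
    if "u + v = 1" for u v :: real and y z
    using that unfolding f by (simp add: inner_add_right algebra_simps) (metis distrib_left mult.right_neutral)
  then show "convex_on UNIV (\<lambda>y. real_of_ereal (f y))" and "concave_on UNIV (\<lambda>y. real_of_ereal (f y))"
    by (simp_all add: convex_on_def concave_on_iff)
qed

lemma convex_on_gradient_inequality:
  fixes f :: "'b::real_inner \<Rightarrow> real"
  assumes convex: "convex_on UNIV f" and deriv: "(f has_derivative (\<lambda>v. g \<bullet> v)) (at y)"
  shows "g \<bullet> (w - y) \<le> f w - f y"
proof -
  define \<phi> where "\<phi> t = f (y + t *\<^sub>R (w - y))" for t :: real
  have "convex_on UNIV \<phi>"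
  proof (rule convex_onI)
    fix t a b :: real
    assume "0 < t" "t < 1"
    have "y + ((1 - t) * a + t * b) *\<^sub>R (w - y)
        = (1 - t) *\<^sub>R (y + a *\<^sub>R (w - y)) + t *\<^sub>R (y + b *\<^sub>R (w - y))"
      by (simp add: algebra_simps)
    then show "\<phi> ((1 - t) *\<^sub>R a + t *\<^sub>R b) \<le> (1 - t) * \<phi> a + t * \<phi> b"
      unfolding \<phi>_def using convex_onD[OF convex, of t] \<open>0 < t\<close> \<open>t < 1\<close> by simp
  qed simp
  moreover have "(\<phi> has_field_derivative g \<bullet> (w - y)) (at 0)"
  proof -
    have "((\<lambda>t. y + t *\<^sub>R (w - y)) has_derivative (\<lambda>t. t *\<^sub>R (w - y))) (at 0)"
      by (auto intro!: derivative_eq_intros)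
    moreover have "(f has_derivative (\<lambda>v. g \<bullet> v)) (at (y + 0 *\<^sub>R (w - y)))"
      using deriv by simp
    ultimately have "(\<phi> has_derivative (\<lambda>t. g \<bullet> (t *\<^sub>R (w - y)))) (at 0)"
      unfolding \<phi>_def by (rule has_derivative_compose)
    then show ?thesis
      by (simp add: has_field_derivative_def mult.commute[of _ "g \<bullet> (w - y)"])
  qed
  ultimately have "(g \<bullet> (w - y)) * (1 - 0) \<le> \<phi> 1 - \<phi> 0"
    by (intro convex_on_imp_above_tangent) auto
  then show ?thesis
    by (simp add: \<phi>_def)
qed

lemma concave_on_gradient_inequality:
  fixes f :: "'b::real_inner \<Rightarrow> real"
  assumes "concave_on UNIV f" and "(f has_derivative (\<lambda>v. g \<bullet> v)) (at y)"
  shows "f w - f y \<le> g \<bullet> (w - y)"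
proof -
  have "((\<lambda>z. - f z) has_derivative (\<lambda>v. (- g) \<bullet> v)) (at y)"
    using has_derivative_minus[OF assms(2)] by simp
  then have "(- g) \<bullet> (w - y) \<le> - f w - - f y"
    using assms(1) unfolding concave_on_def by (rule convex_on_gradient_inequality[rotated])
  then show ?thesis
    by simp
qed

lemma connected_subset_closed_open:
  assumes "connected S" "closed C" "open V" "C \<subseteq> V" "S \<inter> V \<subseteq> C" "S \<inter> C \<noteq> {}"
  shows "S \<subseteq> C"
  using connectedD[OF assms(1,3) open_Compl[OF assms(2)]] assms(4-6) by blast

lemma eventually_mem_open_if_subseq_limits_mem:
  fixes y :: "nat \<Rightarrow> 'b::heine_borel"
  assumes "open U" and "x \<longlonglongrightarrow> x0" and "bounded B" and "eventually (\<lambda>k. y k \<in> B) sequentially"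
    and limits: "\<And>s y0. strict_mono s \<Longrightarrow> (y \<circ> s) \<longlonglongrightarrow> y0 \<Longrightarrow> (x0, y0) \<in> U"
  shows "eventually (\<lambda>k. (x k, y k) \<in> U) sequentially"
proof (rule ccontr)
  assume "\<not> ?thesis"
  then have "frequently (\<lambda>k. y k \<in> B \<and> (x k, y k) \<notin> U) sequentially"
    using assms(4) by (simp add: not_eventually frequently_eventually_conj)
  then have "infinite {k. y k \<in> B \<and> (x k, y k) \<notin> U}"
    by (simp add: frequently_cofinite[symmetric] cofinite_eq_sequentially)
  then obtain r :: "nat \<Rightarrow> nat"
    where r: "strict_mono r" "\<And>n. y (r n) \<in> B \<and> (x (r n), y (r n)) \<notin> U"
    using infinite_enumerate by blast
  have "bounded (range (y \<circ> r))"
    using r(2) by (intro bounded_subset[OF assms(3)]) auto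
  then obtain r' y0 where r': "strict_mono r'" "(y \<circ> r \<circ> r') \<longlonglongrightarrow> y0"
    using bounded_imp_convergent_subsequence by blast
  define s where "s = r \<circ> r'"
  have "strict_mono s"
    unfolding s_def using r(1) r'(1) by (rule strict_mono_o)
  moreover have "(y \<circ> s) \<longlonglongrightarrow> y0"
    using r'(2) by (simp add: s_def o_assoc)
  ultimately have "(x0, y0) \<in> U"
    by (rule limits)
  moreover have "(\<lambda>n. (x (s n), y (s n))) \<longlonglongrightarrow> (x0, y0)"
    using LIMSEQ_subseq_LIMSEQ[OF assms(2) \<open>strict_mono s\<close>] \<open>(y \<circ> s) \<longlonglongrightarrow> y0\<close>
    by (intro tendsto_Pair) (simp_all add: o_def)
  ultimately have "eventually (\<lambda>n. (x (s n), y (s n)) \<in> U) sequentially"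
    using topological_tendstoD assms(1) by metis
  then show False
    using r(2) by (simp add: s_def)
qed

lemma convex_combination_limit_nonpos:
  assumes convex: "\<And>n. convex_on UNIV (F n)" and "\<And>n. F n (b n) \<le> 0" and "0 \<le> t" "t \<le> 1"
    and "(\<lambda>n. F n a) \<longlonglongrightarrow> A" "A \<le> 0" and "(\<lambda>n. F n ((1 - t) *\<^sub>R a + t *\<^sub>R b n)) \<longlonglongrightarrow> Z"
  shows "Z \<le> 0"
proof -
  have "F n ((1 - t) *\<^sub>R a + t *\<^sub>R b n) \<le> (1 - t) * F n a" for n
  proof -
    have "F n ((1 - t) *\<^sub>R a + t *\<^sub>R b n) \<le> (1 - t) * F n a + t * F n (b n)"
      using convex_onD[OF convex] assms(3,4) by blast
    moreover have "t * F n (b n) \<le> 0"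
      using assms(2,3) by (simp add: mult_nonneg_nonpos)
    ultimately show ?thesis
      by linarith
  qed
  then have "Z \<le> (1 - t) * A"
    by (intro LIMSEQ_le[OF assms(7) tendsto_mult_left[OF assms(5)]]) auto
  also have "\<dots> \<le> 0"
    using assms(4,6) by (simp add: mult_nonneg_nonpos)
  finally show ?thesis .
qed

definition feasible_set :: "(nat \<Rightarrow> 'b \<Rightarrow> real) \<Rightarrow> nat \<Rightarrow> nat \<Rightarrow> 'b set" where
  "feasible_set f l p = {y. (\<forall>i\<in>{1..l}. f i y \<le> 0) \<and> (\<forall>i\<in>{l+1..p}. f i y = 0)}"

definition violation :: "(nat \<Rightarrow> 'b \<Rightarrow> real) \<Rightarrow> nat \<Rightarrow> nat \<Rightarrow> 'b \<Rightarrow> real" where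
  "violation f l p y = (\<Sum>i\<in>{1..l}. max 0 (f i y)) + (\<Sum>i\<in>{l+1..p}. \<bar>f i y\<bar>)"

lemma Gamma_eq_feasible_set:
  assumes "l \<le> p" and "\<And>i y. i \<in> {1..p} \<Longrightarrow> \<bar>h i x y\<bar> \<noteq> \<infinity>"
  shows "Gamma h l p x = feasible_set (\<lambda>i y. real_of_ereal (h i x y)) l p"
proof -
  have "h i x y \<le> 0 \<longleftrightarrow> real_of_ereal (h i x y) \<le> 0"
    and "h i x y = 0 \<longleftrightarrow> real_of_ereal (h i x y) = 0" if "i \<in> {1..p}" for i y
    using assms(2)[OF that, of y] by (cases "h i x y"; simp)+
  with assms(1) show ?thesis
    unfolding Gamma_def feasible_set_def by auto
qed

lemma closed_feasible_set:
  assumes "\<And>i. i \<in> {1..p} \<Longrightarrow> continuous_on UNIV (f i)" and "l \<le> p"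
  shows "closed (feasible_set f l p)"
proof -
  have "feasible_set f l p = (\<Inter>i\<in>{1..l}. {y. f i y \<le> 0}) \<inter> (\<Inter>i\<in>{l+1..p}. {y. f i y = 0})"
    unfolding feasible_set_def by auto
  moreover have "closed {y. f i y \<le> 0}" "closed {y. f i y = 0}" if "i \<in> {1..p}" for i
    using assms(1)[OF that] by (auto intro!: closed_Collect_le closed_Collect_eq)
  ultimately show ?thesis
    using assms(2) by (auto intro!: closed_Int closed_INT)
qed

lemma violation_nonneg: "0 \<le> violation f l p y"
  unfolding violation_def by (intro add_nonneg_nonneg sum_nonneg) auto

lemma le_violation:
  shows "\<forall>i\<in>{1..l}. f i y \<le> violation f l p y"
    and "\<forall>i\<in>{l+1..p}. \<bar>f i y\<bar> \<le> violation f l p y"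
proof -
  have I: "0 \<le> (\<Sum>i\<in>{1..l}. max 0 (f i y))" and J: "0 \<le> (\<Sum>i\<in>{l+1..p}. \<bar>f i y\<bar>)"
    by (simp_all add: sum_nonneg)
  show "\<forall>i\<in>{1..l}. f i y \<le> violation f l p y"
  proof
    fix i assume "i \<in> {1..l}"
    then have "max 0 (f i y) \<le> (\<Sum>i\<in>{1..l}. max 0 (f i y))"
      by (intro member_le_sum) auto
    then show "f i y \<le> violation f l p y"
      using J unfolding violation_def by linarith
  qed
  show "\<forall>i\<in>{l+1..p}. \<bar>f i y\<bar> \<le> violation f l p y"
  proof
    fix i assume "i \<in> {l+1..p}"
    then have "\<bar>f i y\<bar> \<le> (\<Sum>i\<in>{l+1..p}. \<bar>f i y\<bar>)"
      by (intro member_le_sum) auto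
    then show "\<bar>f i y\<bar> \<le> violation f l p y"
      using I unfolding violation_def by linarith
  qed
qed

lemma violation_eq_0: "y \<in> feasible_set f l p \<Longrightarrow> violation f l p y = 0"
  unfolding violation_def feasible_set_def by (auto intro!: sum.neutral simp: max_def)

lemma tendsto_violation:
  assumes "\<And>i. i \<in> {1..p} \<Longrightarrow> ((\<lambda>k. F k i (y k)) \<longlongrightarrow> f i y0) G" and "l \<le> p"
  shows "((\<lambda>k. violation (F k) l p (y k)) \<longlongrightarrow> violation f l p y0) G"
  unfolding violation_def using assms
  by (intro tendsto_intros) auto

lemma convex_combination_mem_feasible_set_limit:
  fixes f :: "nat \<Rightarrow> 'a::topological_space \<Rightarrow> 'b::real_normed_vector \<Rightarrow> real"
    and l p :: nat
  defines "S \<equiv> \<lambda>x. feasible_set (\<lambda>i. f i x) l p"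
  assumes "l \<le> p" and "open U"
    and cont: "\<And>i. i \<in> {1..p} \<Longrightarrow> continuous_on U (\<lambda>(x, y). f i x y)"
    and convex: "\<And>i n. i \<in> {1..p} \<Longrightarrow> convex_on UNIV (f i (x n))"
    and concave: "\<And>i n. i \<in> {l+1..p} \<Longrightarrow> concave_on UNIV (f i (x n))"
    and t: "0 \<le> t" "t \<le> 1" and "(x0, a) \<in> U" and zU: "(x0, (1 - t) *\<^sub>R a + t *\<^sub>R b) \<in> U"
    and "a \<in> S x0" and y: "\<And>n. y n \<in> S (x n)" and "x \<longlonglongrightarrow> x0" and "y \<longlonglongrightarrow> b"
  shows "(1 - t) *\<^sub>R a + t *\<^sub>R b \<in> S x0"
proof -
  define z where "z = (1 - t) *\<^sub>R a + t *\<^sub>R b"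
  have lim: "(\<lambda>n. f i (x n) (w n)) \<longlonglongrightarrow> f i x0 c"
    if "i \<in> {1..p}" "(x0, c) \<in> U" "w \<longlonglongrightarrow> c" for i w c
  proof -
    have "(\<lambda>n. (x n, w n)) \<longlonglongrightarrow> (x0, c)"
      using \<open>x \<longlonglongrightarrow> x0\<close> that(3) by (rule tendsto_Pair)
    from continuous_on_tendsto_compose[OF cont[OF that(1)] this that(2)]
      topological_tendstoD[OF this \<open>open U\<close> that(2)]
    show ?thesis by simp
  qed
  have "(\<lambda>n. (1 - t) *\<^sub>R a + t *\<^sub>R y n) \<longlonglongrightarrow> z"
    unfolding z_def using \<open>y \<longlonglongrightarrow> b\<close> by (intro tendsto_intros)
  then have lim_a: "(\<lambda>n. f i (x n) a) \<longlonglongrightarrow> f i x0 a"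
    and lim_z: "(\<lambda>n. f i (x n) ((1 - t) *\<^sub>R a + t *\<^sub>R y n)) \<longlonglongrightarrow> f i x0 z"
    if "i \<in> {1..p}" for i
    using lim[OF that \<open>(x0, a) \<in> U\<close> tendsto_const] lim[OF that zU[folded z_def]] by auto
  have "f i x0 z \<le> 0" if "i \<in> {1..l}" for i
  proof -
    have i: "i \<in> {1..p}"
      using that \<open>l \<le> p\<close> by auto
    have "f i (x n) (y n) \<le> 0" for n
      using that y[of n] unfolding S_def feasible_set_def by blast
    moreover have "f i x0 a \<le> 0"
      using that \<open>a \<in> S x0\<close> unfolding S_def feasible_set_def by blast
    ultimately show ?thesis
      using convex_combination_limit_nonpos[OF convex[OF i] _ t lim_a[OF i] _ lim_z[OF i]]
      by blast
  qed
  moreover have "f i x0 z = 0" if "i \<in> {l+1..p}" for i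
  proof -
    have i: "i \<in> {1..p}"
      using that by auto
    have yn: "f i (x n) (y n) = 0" for n
      using that y[of n] unfolding S_def feasible_set_def by blast
    have a: "f i x0 a = 0"
      using that \<open>a \<in> S x0\<close> unfolding S_def feasible_set_def by blast
    have "f i x0 z \<le> 0"
      using convex_combination_limit_nonpos[OF convex[OF i] _ t lim_a[OF i] _ lim_z[OF i]] yn a
      by simp
    moreover have "- f i x0 z \<le> 0"
      using convex_combination_limit_nonpos[of "\<lambda>n y. - f i (x n) y", OF _ _ t
          tendsto_minus[OF lim_a[OF i]] _ tendsto_minus[OF lim_z[OF i]]] concave[OF that] yn a
      by (simp add: concave_on_def)
    ultimately show ?thesis
      by simp
  qed
  ultimately show ?thesis
    unfolding S_def feasible_set_def z_def[symmetric] by auto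
qed

lemma feasible_set_limit:
  fixes f :: "nat \<Rightarrow> 'a::topological_space \<Rightarrow> 'b::real_normed_vector \<Rightarrow> real"
    and l p :: nat
  defines "S \<equiv> \<lambda>x. feasible_set (\<lambda>i. f i x) l p"
  assumes "l \<le> p" and "open U" and "{x0} \<times> S x0 \<subseteq> U" and "closed (S x0)"
    and cont: "\<And>i. i \<in> {1..p} \<Longrightarrow> continuous_on U (\<lambda>(x, y). f i x y)"
    and convex: "\<And>i n. i \<in> {1..p} \<Longrightarrow> convex_on UNIV (f i (x n))"
    and concave: "\<And>i n. i \<in> {l+1..p} \<Longrightarrow> concave_on UNIV (f i (x n))"
    and "a \<in> S x0" and y: "\<And>n. y n \<in> S (x n)" and "x \<longlonglongrightarrow> x0" and "y \<longlonglongrightarrow> b"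
  shows "b \<in> S x0"
proof -
  have segment: "closed_segment a b \<inter> Pair x0 -` U \<subseteq> S x0"
  proof
    fix z assume "z \<in> closed_segment a b \<inter> Pair x0 -` U"
    then obtain t where "0 \<le> t" "t \<le> 1" "z = (1 - t) *\<^sub>R a + t *\<^sub>R b" and "(x0, z) \<in> U"
      unfolding closed_segment_def by auto
    moreover have "(x0, a) \<in> U"
      using assms(4,9) by auto
    ultimately show "z \<in> S x0"
      unfolding S_def using assms(2,3,9-12)[unfolded S_def] cont convex concave
      by (blast intro: convex_combination_mem_feasible_set_limit)
  qed
  have "open (Pair x0 -` U)"
    by (rule continuous_open_vimage[OF \<open>open U\<close>]) (intro continuous_intros)
  then have "closed_segment a b \<subseteq> S x0"
  proof (rule connected_subset_closed_open[OF connected_segment assms(5) _ _ segment])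
    show "S x0 \<subseteq> Pair x0 -` U"
      using assms(4) by blast
    show "closed_segment a b \<inter> S x0 \<noteq> {}"
      using \<open>a \<in> S x0\<close> by blast
  qed
  then show ?thesis
    by auto
qed

lemma inequality_multiplier_term_le:
  fixes f :: "'b::real_inner \<Rightarrow> real"
  assumes "convex_on UNIV f" and "(f has_derivative (\<lambda>v. g \<bullet> v)) (at y)"
    and "0 \<le> c" and "c * f y = 0" and "f \<nu> \<le> e"
  shows "c * (g \<bullet> (\<nu> - y)) \<le> \<bar>c\<bar> * e"
proof -
  have "c * (g \<bullet> (\<nu> - y)) \<le> c * (f \<nu> - f y)"
    using assms(3) convex_on_gradient_inequality[OF assms(1,2)] by (simp add: mult_left_mono)
  also have "\<dots> = c * f \<nu>"
    using assms(4) by (simp add: right_diff_distrib)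
  also have "\<dots> \<le> \<bar>c\<bar> * e"
    using assms(3,5) by (simp add: mult_left_mono)
  finally show ?thesis .
qed

lemma equality_multiplier_term_le:
  fixes f :: "'b::real_inner \<Rightarrow> real"
  assumes "convex_on UNIV f" and "concave_on UNIV f" and "(f has_derivative (\<lambda>v. g \<bullet> v)) (at y)"
    and "f y = 0" and "\<bar>f \<nu>\<bar> \<le> e"
  shows "c * (g \<bullet> (\<nu> - y)) \<le> \<bar>c\<bar> * e"
proof -
  have "g \<bullet> (\<nu> - y) = f \<nu>"
    using convex_on_gradient_inequality[OF assms(1,3)] concave_on_gradient_inequality[OF assms(2,3)]
      assms(4) by (intro antisym) auto
  then have "c * (g \<bullet> (\<nu> - y)) \<le> \<bar>c\<bar> * \<bar>f \<nu>\<bar>"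
    by (simp add: abs_mult[symmetric])
  also have "\<dots> \<le> \<bar>c\<bar> * e"
    using assms(5) by (simp add: mult_left_mono)
  finally show ?thesis .
qed

lemma norm_le_by_multipliers:
  fixes f :: "nat \<Rightarrow> 'b::real_inner \<Rightarrow> real" and g :: "nat \<Rightarrow> 'b" and lam :: "nat \<Rightarrow> real"
  assumes "y \<in> feasible_set f l p"
    and deriv: "\<And>i. i \<in> {1..p} \<Longrightarrow> (f i has_derivative (\<lambda>v. g i \<bullet> v)) (at y)"
    and convex: "\<And>i. i \<in> {1..p} \<Longrightarrow> convex_on UNIV (f i)"
    and concave: "\<And>i. i \<in> {l+1..p} \<Longrightarrow> concave_on UNIV (f i)"
    and stationary: "(1 / norm (y - \<nu>)) *\<^sub>R (y - \<nu>) + (\<Sum>i=1..p. lam i *\<^sub>R g i) = 0"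
    and lam_I: "\<And>i. i \<in> {1..l} \<Longrightarrow> 0 \<le> lam i \<and> lam i * f i y = 0"
    and lam_M: "(\<Sum>i=1..p. \<bar>lam i\<bar>) \<le> M"
    and "0 \<le> e" and viol_I: "\<And>i. i \<in> {1..l} \<Longrightarrow> f i \<nu> \<le> e"
    and viol_J: "\<And>i. i \<in> {l+1..p} \<Longrightarrow> \<bar>f i \<nu>\<bar> \<le> e"
  shows "norm (y - \<nu>) \<le> M * e"
proof -
  have "(\<Sum>i=1..p. lam i *\<^sub>R g i) = (1 / norm (y - \<nu>)) *\<^sub>R (\<nu> - y)"
    using stationary by (simp add: add_eq_0_iff scaleR_diff_right)
  then have "(\<Sum>i=1..p. lam i *\<^sub>R g i) \<bullet> (\<nu> - y) = (norm (\<nu> - y))\<^sup>2 / norm (y - \<nu>)"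
    by (simp add: power2_norm_eq_inner)
  then have "norm (y - \<nu>) = (\<Sum>i=1..p. lam i *\<^sub>R g i) \<bullet> (\<nu> - y)"
    by (simp add: norm_minus_commute power2_eq_square)
  also have "\<dots> = (\<Sum>i=1..p. lam i * (g i \<bullet> (\<nu> - y)))"
    by (simp add: inner_sum_left)
  also have "\<dots> \<le> (\<Sum>i=1..p. \<bar>lam i\<bar> * e)"
  proof (rule sum_mono)
    fix i assume i: "i \<in> {1..p}"
    show "lam i * (g i \<bullet> (\<nu> - y)) \<le> \<bar>lam i\<bar> * e"
    proof (cases "i \<le> l")
      case True
      with i have "i \<in> {1..l}"
        by simp
      with lam_I viol_I show ?thesis
        by (intro inequality_multiplier_term_le[OF convex[OF i] deriv[OF i]]) auto
    next
      case False
      with i have "i \<in> {l+1..p}"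
        by simp
      with \<open>y \<in> feasible_set f l p\<close> viol_J show ?thesis
        by (intro equality_multiplier_term_le[OF convex[OF i] concave deriv[OF i]])
          (auto simp: feasible_set_def)
    qed
  qed
  also have "\<dots> \<le> M * e"
    using lam_M \<open>0 \<le> e\<close> by (simp add: mult_right_mono flip: sum_distrib_right)
  finally show ?thesis .
qed

text \<open>No finiteness is needed: an infinite term makes the right-hand side \<open>\<infinity>\<close>, and
  \<^const>\<open>real_of_ereal\<close> sends \<open>-\<infinity>\<close> to \<open>0 \<le> e\<close>.\<close>

lemma ereal_le_mult_max_violation:
  fixes f :: "nat \<Rightarrow> ereal"
  assumes "0 < M"
    and bound: "\<And>e. 0 \<le> e \<Longrightarrow> (\<And>i. i \<in> I \<Longrightarrow> real_of_ereal (f i) \<le> e)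
      \<Longrightarrow> (\<And>i. i \<in> J \<Longrightarrow> \<bar>real_of_ereal (f i)\<bar> \<le> e) \<Longrightarrow> d \<le> M * e"
  shows "ereal d \<le> ereal M * max 0 (max (SUP i\<in>I. f i) (SUP i\<in>J. \<bar>f i\<bar>))"
proof -
  define E where "E = max 0 (max (SUP i\<in>I. f i) (SUP i\<in>J. \<bar>f i\<bar>))"
  have I: "f i \<le> E" if "i \<in> I" for i
    unfolding E_def using that by (intro max.coboundedI2 max.coboundedI1 SUP_upper)
  have J: "\<bar>f i\<bar> \<le> E" if "i \<in> J" for i
    unfolding E_def using that by (intro max.coboundedI2 SUP_upper)
  have "0 \<le> E"
    unfolding E_def by simp
  then consider r where "E = ereal r" "0 \<le> r" | "E = \<infinity>"
    by (cases E) auto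
  then show ?thesis
  proof cases
    case 1
    have "real_of_ereal (f i) \<le> r" if "i \<in> I" for i
      using I[OF that] 1 by (cases "f i") auto
    moreover have "\<bar>real_of_ereal (f i)\<bar> \<le> r" if "i \<in> J" for i
      using J[OF that] 1 by (cases "f i") auto
    ultimately have "d \<le> M * r"
      using bound 1(2) by blast
    then show ?thesis
      using 1(1) unfolding E_def by simp
  next
    case 2
    then show ?thesis
      using \<open>0 < M\<close> unfolding E_def by simp
  qed
qed

locale constraint_system =
  fixes h :: "nat \<Rightarrow> 'a::euclidean_space \<Rightarrow> 'b::euclidean_space \<Rightarrow> ereal" and l p :: nat
  assumes l_le_p: "l \<le> p"
    and finite_slice: "\<And>i a y. a \<in> domS (Gamma h l p) \<Longrightarrow> i \<in> {1..p} \<Longrightarrow> \<bar>h i a y\<bar> \<noteq> \<infinity>"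
    and continuous_slice: "\<And>i a. a \<in> domS (Gamma h l p) \<Longrightarrow> i \<in> {1..p} \<Longrightarrow>
      continuous_on UNIV (\<lambda>y. real_of_ereal (h i a y))"
    and convex_slice: "\<And>i a. i \<in> {1..l} \<Longrightarrow> ereal_convex (h i a)"
    and affine_slice: "\<And>i a. i \<in> {l+1..p} \<Longrightarrow> ereal_affine (h i a)"
begin

definition H :: "nat \<Rightarrow> 'a \<Rightarrow> 'b \<Rightarrow> real" where
  "H i a y = real_of_ereal (h i a y)"

abbreviation G :: "'a \<Rightarrow> 'b set" where
  "G \<equiv> Gamma h l p"

lemma G_eq_feasible_set: "a \<in> domS G \<Longrightarrow> G a = feasible_set (\<lambda>i. H i a) l p"
  unfolding H_def by (intro Gamma_eq_feasible_set l_le_p finite_slice)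

lemma convex_H:
  assumes "a \<in> domS G" and "i \<in> {1..p}"
  shows "convex_on UNIV (H i a)"
proof (cases "i \<le> l")
  case True
  then show ?thesis
    unfolding H_def[abs_def] using assms
    by (intro convex_on_real_of_ereal convex_slice finite_slice) auto
next
  case False
  then show ?thesis
    unfolding H_def[abs_def] using assms
    by (intro real_of_ereal_affine_convex_concave(1) affine_slice) auto
qed

lemma concave_H: "i \<in> {l+1..p} \<Longrightarrow> concave_on UNIV (H i a)"
  unfolding H_def[abs_def] by (intro real_of_ereal_affine_convex_concave affine_slice)

lemma closed_Gamma: "a \<in> domS G \<Longrightarrow> closed (G a)"
  unfolding G_eq_feasible_set H_def using l_le_p
  by (intro closed_feasible_set continuous_slice)

definition smooth_in_y_on :: "('a \<times> 'b) set \<Rightarrow> bool" where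
  "smooth_in_y_on U \<longleftrightarrow> (\<forall>i\<in>{1..p}.
           (\<forall>(x', y')\<in>U. \<bar>h i x' y'\<bar> \<noteq> \<infinity>)
         \<and> continuous_on U (\<lambda>(x', y'). h i x' y')
         \<and> (\<forall>(x', y')\<in>U. ((\<lambda>z. real_of_ereal (h i x' z)) has_derivative
                               (\<lambda>v. ygrad (h i x') y' \<bullet> v)) (at y'))
         \<and> continuous_on U (\<lambda>(x', y'). ygrad (h i x') y'))"

lemma smooth_in_y_on_continuous_H:
  assumes "smooth_in_y_on U" and "i \<in> {1..p}"
  shows "continuous_on U (\<lambda>(a, y). H i a y)"
proof -
  have "continuous_on U (\<lambda>(a, y). h i a y)" and "\<forall>(a, y)\<in>U. \<bar>h i a y\<bar> \<noteq> \<infinity>"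
    using assms unfolding smooth_in_y_on_def by auto
  then show ?thesis
    using continuous_on_iff_real[of U "\<lambda>(a, y). h i a y"]
    unfolding H_def by (auto simp: o_def case_prod_beta)
qed

lemma smooth_in_y_on_has_derivative_H:
  assumes "smooth_in_y_on U" and "(a, y) \<in> U" and "i \<in> {1..p}"
  shows "(H i a has_derivative (\<lambda>v. ygrad (h i a) y \<bullet> v)) (at y)"
  using assms unfolding smooth_in_y_on_def H_def[abs_def] by fastforce

lemma norm_le_of_LamM:
  assumes "LamM h l p M \<nu> a y \<noteq> {}" and "smooth_in_y_on U" and "(a, y) \<in> U"
    and "a \<in> domS G" and "y \<in> G a"
    and "0 \<le> e" and "\<forall>i\<in>{1..l}. H i a \<nu> \<le> e" and "\<forall>i\<in>{l+1..p}. \<bar>H i a \<nu>\<bar> \<le> e"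
  shows "norm (y - \<nu>) \<le> M * e"
proof -
  obtain lam where lam: "lam \<in> LamM h l p M \<nu> a y"
    using assms(1) by blast
  show ?thesis
  proof (rule norm_le_by_multipliers)
    show "y \<in> feasible_set (\<lambda>i. H i a) l p"
      using assms(4,5) G_eq_feasible_set by simp
    show "(1 / norm (y - \<nu>)) *\<^sub>R (y - \<nu>) + (\<Sum>i=1..p. lam i *\<^sub>R ygrad (h i a) y) = 0"
      and "\<And>i. i \<in> {1..l} \<Longrightarrow> 0 \<le> lam i \<and> lam i * H i a y = 0"
      and "(\<Sum>i=1..p. \<bar>lam i\<bar>) \<le> M"
      using lam unfolding LamM_def Lam_def H_def by auto
  qed (use assms(2-4,6-8) smooth_in_y_on_has_derivative_H convex_H concave_H in auto)
qed

lemma infdist_Gamma_le_of_LamM: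
  assumes "LamM h l p M \<nu> a y \<noteq> {}" and "smooth_in_y_on U" and "(a, y) \<in> U"
    and "a \<in> domS G" and "y \<in> G a" and "0 < M"
  shows "ereal (infdist \<nu> (G a))
    \<le> ereal M * max 0 (max (SUP i\<in>{1..l}. h i a \<nu>) (SUP i\<in>{l+1..p}. \<bar>h i a \<nu>\<bar>))"
proof (rule ereal_le_mult_max_violation[OF \<open>0 < M\<close>])
  fix e :: real
  assume "0 \<le> e" "\<And>i. i \<in> {1..l} \<Longrightarrow> real_of_ereal (h i a \<nu>) \<le> e"
    "\<And>i. i \<in> {l+1..p} \<Longrightarrow> \<bar>real_of_ereal (h i a \<nu>)\<bar> \<le> e"
  then have "norm (y - \<nu>) \<le> M * e"
    using assms(1-5) unfolding H_def by (intro norm_le_of_LamM[unfolded H_def]) auto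
  moreover have "infdist \<nu> (G a) \<le> norm (y - \<nu>)"
    using infdist_le[OF assms(5)] by (simp add: dist_norm norm_minus_commute)
  ultimately show "infdist \<nu> (G a) \<le> M * e"
    by linarith
qed

lemma tendsto_violation_0:
  assumes "open U" and "smooth_in_y_on U" and "(x0, y0) \<in> U"
    and "x0 \<in> domS G" and "y0 \<in> G x0" and "x \<longlonglongrightarrow> x0" and "\<nu> \<longlonglongrightarrow> y0"
  shows "(\<lambda>n. violation (\<lambda>i. H i (x n)) l p (\<nu> n)) \<longlonglongrightarrow> 0"
proof -
  have "(\<lambda>n. H i (x n) (\<nu> n)) \<longlonglongrightarrow> H i x0 y0" if "i \<in> {1..p}" for i
  proof -
    have "isCont (\<lambda>(a, y). H i a y) (x0, y0)"
      using smooth_in_y_on_continuous_H[OF assms(2) that] assms(1,3)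
        continuous_on_eq_continuous_at by blast
    from isCont_tendsto_compose[OF this tendsto_Pair[OF assms(6,7)]] show ?thesis
      by simp
  qed
  from tendsto_violation[where F = "\<lambda>n i. H i (x n)" and f = "\<lambda>i. H i x0", OF this l_le_p]
  show ?thesis
    using assms(4,5) by (simp add: G_eq_feasible_set violation_eq_0)
qed

lemma eventually_feasible_in_open:
  assumes "open U" and U: "{x0} \<times> G x0 \<subseteq> U" and "smooth_in_y_on U"
    and "x0 \<in> domS G" and "locally_bounded_at G x0"
    and x: "\<And>n. x n \<in> domS G" and y: "\<And>n. y n \<in> G (x n)" and "x \<longlonglongrightarrow> x0"
  shows "eventually (\<lambda>n. (x n, y n) \<in> U) sequentially"
proof -
  obtain B V where "bounded B" "open V" "x0 \<in> V" and B: "\<And>a. a \<in> V \<Longrightarrow> G a \<subseteq> B"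
    using assms(5) unfolding locally_bounded_at_def by blast
  have "eventually (\<lambda>n. y n \<in> B) sequentially"
    using topological_tendstoD[OF \<open>x \<longlonglongrightarrow> x0\<close> \<open>open V\<close> \<open>x0 \<in> V\<close>]
    by eventually_elim (use B y in blast)
  then show ?thesis
  proof (rule eventually_mem_open_if_subseq_limits_mem[OF \<open>open U\<close> \<open>x \<longlonglongrightarrow> x0\<close> \<open>bounded B\<close>])
    fix s y0 assume "strict_mono s" "(y \<circ> s) \<longlonglongrightarrow> y0"
    obtain a where "a \<in> G x0"
      using \<open>x0 \<in> domS G\<close> unfolding domS_def by blast
    have "y0 \<in> feasible_set (\<lambda>i. H i x0) l p"
    proof (rule feasible_set_limit[where x = "\<lambda>n. x (s n)" and y = "\<lambda>n. y (s n)"])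
      show "(\<lambda>n. x (s n)) \<longlonglongrightarrow> x0"
        using LIMSEQ_subseq_LIMSEQ[OF \<open>x \<longlonglongrightarrow> x0\<close> \<open>strict_mono s\<close>] by (simp add: o_def)
      show "(\<lambda>n. y (s n)) \<longlonglongrightarrow> y0"
        using \<open>(y \<circ> s) \<longlonglongrightarrow> y0\<close> by (simp add: o_def)
    qed (use assms \<open>a \<in> G x0\<close> l_le_p smooth_in_y_on_continuous_H convex_H concave_H closed_Gamma
        G_eq_feasible_set in auto)
    then show "(x0, y0) \<in> U"
      using U G_eq_feasible_set[OF \<open>x0 \<in> domS G\<close>] by blast
  qed
qed

end

theorem lemma3p1:
  fixes h :: "nat \<Rightarrow> 'a::euclidean_space \<Rightarrow> 'b::euclidean_space \<Rightarrow> ereal"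
    and l p :: nat and xb :: 'a and yb :: 'b and M :: real
    and x :: "nat \<Rightarrow> 'a" and \<nu> yk :: "nat \<Rightarrow> 'b"
  assumes lp: "l \<le> p"
    and xb_dom: "xb \<in> domS (Gamma h l p)"
    and yb_in: "yb \<in> Gamma h l p xb"
    and smooth: "\<exists>U. open U \<and> {xb} \<times> Gamma h l p xb \<subseteq> U \<and>
        (\<forall>i\<in>{1..p}.
           (\<forall>(x', y')\<in>U. \<bar>h i x' y'\<bar> \<noteq> \<infinity>)
         \<and> continuous_on U (\<lambda>(x', y'). h i x' y')
         \<and> (\<forall>(x', y')\<in>U. ((\<lambda>z. real_of_ereal (h i x' z)) has_derivative
                               (\<lambda>v. ygrad (h i x') y' \<bullet> v)) (at y'))
         \<and> continuous_on U (\<lambda>(x', y'). ygrad (h i x') y'))"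
    and slice_cont: "\<forall>x'\<in>domS (Gamma h l p). \<forall>i\<in>{1..p}.
        (\<forall>y'. \<bar>h i x' y'\<bar> \<noteq> \<infinity>) \<and> continuous_on UNIV (\<lambda>y'. real_of_ereal (h i x' y'))"
    and A1: "\<forall>x'. (\<forall>i\<in>{1..l}. ereal_convex (h i x')) \<and> (\<forall>i\<in>{l+1..p}. ereal_affine (h i x'))"
    and A2: "locally_bounded_at (Gamma h l p) xb"
    and M_pos: "M > 0"
    and x_dom: "\<forall>k. x k \<in> domS (Gamma h l p)"
    and x_lim: "x \<longlonglongrightarrow> xb"
    and \<nu>_lim: "\<nu> \<longlonglongrightarrow> yb"
    and \<nu>_out: "\<forall>k. \<nu> k \<notin> Gamma h l p (x k)"
    and yk_proj: "\<forall>k. yk k \<in> proj (\<nu> k) (Gamma h l p (x k))"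
    and Lam_ne: "eventually (\<lambda>k. LamM h l p M (\<nu> k) (x k) (yk k) \<noteq> {}) sequentially"
  shows "yk \<longlonglongrightarrow> yb \<and>
    eventually (\<lambda>k. ereal (infdist (\<nu> k) (Gamma h l p (x k)))
        \<le> ereal M * max 0 (max (SUP i\<in>{1..l}. h i (x k) (\<nu> k))
                               (SUP i\<in>{l+1..p}. \<bar>h i (x k) (\<nu> k)\<bar>))) sequentially"
proof -
  interpret constraint_system h l p
    using lp slice_cont A1 by unfold_locales auto
  from smooth obtain U where "open U" and U: "{xb} \<times> G xb \<subseteq> U" and "smooth_in_y_on U"
    unfolding smooth_in_y_on_def by blast
  have yk: "yk k \<in> G (x k)" for k
    using yk_proj unfolding proj_def by blast
  have near: "eventually (\<lambda>k. (x k, yk k) \<in> U \<and> LamM h l p M (\<nu> k) (x k) (yk k) \<noteq> {}) sequentially"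
    using eventually_feasible_in_open[OF \<open>open U\<close> U \<open>smooth_in_y_on U\<close> xb_dom A2 x_dom[rule_format]
        yk x_lim] Lam_ne
    by (rule eventually_conj)
  have "(\<lambda>k. violation (\<lambda>i. H i (x k)) l p (\<nu> k)) \<longlonglongrightarrow> 0"
    using U yb_in by (intro tendsto_violation_0[OF \<open>open U\<close> \<open>smooth_in_y_on U\<close> _ xb_dom yb_in x_lim \<nu>_lim]) auto
  moreover have "eventually (\<lambda>k. norm (yk k - \<nu> k) \<le> M * violation (\<lambda>i. H i (x k)) l p (\<nu> k))
      sequentially"
    using near
  proof eventually_elim
    case (elim k)
    then show ?case
      using \<open>smooth_in_y_on U\<close> x_dom yk le_violation[where f = "\<lambda>i. H i (x k)"]
      by (intro norm_le_of_LamM violation_nonneg) auto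
  qed
  ultimately have "(\<lambda>k. yk k - \<nu> k) \<longlonglongrightarrow> 0"
    by (rule Lim_null_comparison[OF _ tendsto_mult_right_zero, rotated])
  from tendsto_add[OF this \<nu>_lim] have "yk \<longlonglongrightarrow> yb"
    by simp
  moreover have "eventually (\<lambda>k. ereal (infdist (\<nu> k) (G (x k)))
        \<le> ereal M * max 0 (max (SUP i\<in>{1..l}. h i (x k) (\<nu> k))
                               (SUP i\<in>{l+1..p}. \<bar>h i (x k) (\<nu> k)\<bar>))) sequentially"
    using near
  proof eventually_elim
    case (elim k)
    then show ?case
      using \<open>smooth_in_y_on U\<close> x_dom yk M_pos by (intro infdist_Gamma_le_of_LamM) auto
  qed
  ultimately show ?thesis
    by blast
qed

end
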